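(* Let $(X,T)$ be a uniquely ergodic topological dynamical system with unique invariant probability measure $\mu$, and assume the measure-preserving system $(X,\mu,T)$ is mixing. Let $U\subset X$ be open with $0<\mu(U)\le\mu(\overline U)<1$, let $x_0\in X$ and let $A=\{n\in\mathbb{N}\colon T^nx_0\in U\}$. Then $d^*(A)>0$, and there do not exist $B\subset\mathbb{N}$ with $d^*(B)>0$ and an infinite set $C\subset\mathbb{N}$ with $B+C\subset A$.
   Context: A topological dynamical system $(X,T)$ is a compact metric space $X$ with a continuous surjection $T\colon X\to X$. Convention: $\mathbb{N}=\{0,1,2,\dots\}$. For $A\subset\mathbb{N}$, $d^*(A)=\lim_{N\to\infty}\sup_{M\in\mathbb{N}}\frac{|A\cap[M,M+N)|}{N}$. $B+C=\{b+c\colon b\in B,\ c\in C\}$. *)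

theory Defs
  imports "HOL-Probability.Probability"
begin

definition tds :: "'a::metric_space set \<Rightarrow> ('a \<Rightarrow> 'a) \<Rightarrow> bool" where
  "tds X T \<longleftrightarrow> compact X \<and> continuous_on X T \<and> T ` X = X"

definition invariant_prob :: "'a::metric_space set \<Rightarrow> ('a \<Rightarrow> 'a) \<Rightarrow> 'a measure \<Rightarrow> bool" where
  "invariant_prob X T \<mu> \<longleftrightarrow> prob_space \<mu> \<and> sets \<mu> = sets (restrict_space borel X) \<and>
     space \<mu> = X \<and> T \<in> measurable \<mu> \<mu> \<and> distr \<mu> \<mu> T = \<mu>"

definition uniquely_ergodic_with :: "'a::metric_space set \<Rightarrow> ('a \<Rightarrow> 'a) \<Rightarrow> 'a measure \<Rightarrow> bool" where
  "uniquely_ergodic_with X T \<mu> \<longleftrightarrow> invariant_prob X T \<mu> \<and> (\<forall>\<nu>. invariant_prob X T \<nu> \<longrightarrow> \<nu> = \<mu>)"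

definition mixing :: "'a measure \<Rightarrow> ('a \<Rightarrow> 'a) \<Rightarrow> bool" where
  "mixing \<mu> T \<longleftrightarrow> (\<forall>A\<in>sets \<mu>. \<forall>B\<in>sets \<mu>.
     (\<lambda>n. measure \<mu> (A \<inter> ((T ^^ n) -` B \<inter> space \<mu>))) \<longlonglongrightarrow> measure \<mu> A * measure \<mu> B)"

definition upper_banach_density :: "nat set \<Rightarrow> real" where
  "upper_banach_density A =
     lim (\<lambda>N. SUP M. real (card (A \<inter> {M..<M+N})) / real N)"

definition sumset :: "nat set \<Rightarrow> nat set \<Rightarrow> nat set" where
  "sumset B C = {b + c | b c. b \<in> B \<and> c \<in> C}"

end

theory Submission
  imports Defs "HOL-Library.Diagonal_Subsequence"
begin

text \<open>
  Unique ergodicity makes visit frequencies uniform: for a closed set \<open>F\<close> and \<open>\<epsilon> > 0\<close>, every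
  long enough orbit segment spends at most a fraction \<open>\<mu> F + \<epsilon>\<close> of its time in \<open>F\<close>, since
  otherwise a limit of orbit averages (Krylov--Bogolyubov) would be an invariant measure giving
  \<open>F\<close> mass at least \<open>\<mu> F + \<epsilon>\<close>. Applied to \<open>X - U\<close> this gives \<open>d\<^sup>*(A) \<ge> \<mu> U\<close>.
  If \<open>B + C \<subseteq> A\<close> with \<open>C\<close> infinite, then for any \<open>c\<^sub>1, \<dots>, c\<^sub>k \<in> C\<close> the points
  \<open>T\<^sup>b x\<^sub>0\<close> with \<open>b \<in> B\<close> lie in the closed set of points whose images under all
  \<open>T ^^ c\<^sub>i\<close> lie in \<open>closure U\<close>. Choosing each \<open>c\<^sub>i\<close> large, mixing makes the measure
  of this set close to \<open>\<mu>(closure U)\<^sup>k\<close>, and the uniform bound forces \<open>d\<^sup>*(B) = 0\<close>.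
\<close>

lemma funpow_mem: "T ` X \<subseteq> X \<Longrightarrow> x \<in> X \<Longrightarrow> (T ^^ n) x \<in> X"
  by (induction n) auto

lemma continuous_on_funpow: "continuous_on X T \<Longrightarrow> T ` X \<subseteq> X \<Longrightarrow> continuous_on X (T ^^ n)"
proof (induction n)
  case (Suc n)
  have "(T ^^ n) ` X \<subseteq> X" using funpow_mem[OF Suc.prems(2)] by auto
  then have "continuous_on X (T \<circ> (T ^^ n))"
    using Suc by (intro continuous_on_compose continuous_on_subset[OF Suc.prems(1)]) auto
  then show ?case by simp
qed simp

lemma closed_in_sets_restrict_borel: "closed G \<Longrightarrow> G \<subseteq> X \<Longrightarrow> G \<in> sets (restrict_space borel X)"
  by (auto simp: sets_restrict_space intro!: image_eqI[where x=G] borel_closed)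

lemma sum_indicator_eq_card_lessThan:
  "(\<Sum>m<(n::nat). indicator F (f m) :: real) = real (card {m. m < n \<and> f m \<in> F})"
proof (induction n)
  case (Suc n)
  have "{m. m < Suc n \<and> f m \<in> F} = {m. m < n \<and> f m \<in> F} \<union> (if f n \<in> F then {n} else {})"
    by (auto simp: less_Suc_eq)
  then show ?case using Suc by (auto simp: indicator_def)
qed simp

lemma abs_integral_diff_le:
  fixes f g :: "'b \<Rightarrow> real"
  assumes "prob_space M" "integrable M f" "integrable M g"
    and "\<And>x. x \<in> space M \<Longrightarrow> \<bar>f x - g x\<bar> \<le> c"
  shows "\<bar>integral\<^sup>L M f - integral\<^sup>L M g\<bar> \<le> c"
proof -
  interpret prob_space M by fact
  have le: "f x \<le> g x + c" "g x \<le> f x + c" if "x \<in> space M" for x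
    using assms(4)[OF that] by (simp_all add: abs_le_iff)
  have "integral\<^sup>L M f \<le> integral\<^sup>L M (\<lambda>x. g x + c)"
    using assms le by (intro integral_mono_AE AE_I2) auto
  moreover have "integral\<^sup>L M g \<le> integral\<^sup>L M (\<lambda>x. f x + c)"
    using assms le by (intro integral_mono_AE AE_I2) auto
  ultimately show ?thesis using assms by (simp add: abs_le_iff prob_space)
qed

section \<open>Measures are determined by integrals of continuous functions\<close>

definition cutoff :: "'a::metric_space set \<Rightarrow> nat \<Rightarrow> 'a \<Rightarrow> real" where
  "cutoff F m x = max 0 (1 - real m * infdist x F)"

lemma continuous_on_cutoff: "continuous_on S (cutoff F m)"
  unfolding cutoff_def by (intro continuous_intros)

lemma cutoff_bounds: "0 \<le> cutoff F m x" "cutoff F m x \<le> 1"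
  unfolding cutoff_def using infdist_nonneg[of x F] by auto

lemma indicator_le_cutoff: "indicator F x \<le> cutoff F m x"
  using infdist_nonneg[of x F] by (cases "x \<in> F") (auto simp: cutoff_def)

lemma cutoff_tendsto_indicator:
  fixes F :: "'a::metric_space set"
  assumes "closed F" "F \<noteq> {}"
  shows "(\<lambda>m. cutoff F m x) \<longlonglongrightarrow> indicator F x"
proof (cases "x \<in> F")
  case False
  then have d: "infdist x F > 0" using infdist_pos_not_in_closed assms by blast
  obtain m0 :: nat where m0: "m0 * infdist x F > 1" using reals_Archimedean3[OF d] by blast
  have "cutoff F m x = 0" if "m \<ge> m0" for m
  proof -
    have "real m * infdist x F \<ge> m0 * infdist x F" using that d by (intro mult_right_mono) auto
    then show ?thesis using m0 by (simp add: cutoff_def)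
  qed
  then have "eventually (\<lambda>m. cutoff F m x = 0) sequentially" by (auto simp: eventually_sequentially)
  then show ?thesis using False by (simp add: tendsto_eventually)
qed (simp add: cutoff_def)

lemma integral_cutoff_tendsto_measure:
  fixes M :: "'a::metric_space measure"
  assumes "finite_measure M" "sets M = sets (restrict_space borel X)"
    and "closed F" "F \<subseteq> X" "F \<noteq> {}"
  shows "(\<lambda>m. integral\<^sup>L M (cutoff F m)) \<longlonglongrightarrow> measure M F"
proof -
  interpret finite_measure M by fact
  have F: "F \<in> sets M" using assms(2-4) closed_in_sets_restrict_borel by blast
  have "(\<lambda>m. integral\<^sup>L M (cutoff F m)) \<longlonglongrightarrow> integral\<^sup>L M (indicator F)"
  proof (rule integral_dominated_convergence[where w="\<lambda>_. 1"])
    show "cutoff F i \<in> borel_measurable M" for i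
      using measurable_cong_sets[OF assms(2) refl]
        borel_measurable_continuous_on_restrict[OF continuous_on_cutoff] by blast
    show "AE x in M. norm (cutoff F i x) \<le> 1" for i
      using cutoff_bounds[of F i] by (intro always_eventually) (simp add: abs_le_iff)
  qed (use F cutoff_tendsto_indicator[OF assms(3,5)] in auto)
  then show ?thesis using F by simp
qed

lemma measure_eqI_continuous_integrals:
  fixes M1 M2 :: "'a::metric_space measure"
  assumes "finite_measure M1" "finite_measure M2" "closed X"
    and sets1: "sets M1 = sets (restrict_space borel X)"
    and sets2: "sets M2 = sets (restrict_space borel X)"
    and integrals_eq: "\<And>h::'a\<Rightarrow>real. continuous_on X h \<Longrightarrow> integral\<^sup>L M1 h = integral\<^sup>L M2 h"
  shows "M1 = M2"
proof -
  let ?E = "(\<inter>) X ` {S. closed S}"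
  have generated: "sets (restrict_space borel X) = sigma_sets X ?E"
  proof -
    have "sets (restrict_space borel X) = (\<inter>) X ` sigma_sets UNIV {S. closed S}"
      by (simp add: sets_restrict_space borel_eq_closed)
    also have "\<dots> = sigma_sets X ?E"
      by (rule sigma_sets_Int) (use assms(3) in \<open>auto intro: sigma_sets.Basic[of X UNIV]\<close>)
    finally show ?thesis .
  qed
  show ?thesis
  proof (rule measure_eqI_generator_eq[where E="?E" and \<Omega>=X and A="\<lambda>_. X"])
    show "Int_stable ?E"
    proof (rule Int_stableI)
      fix a b assume "a \<in> ?E" "b \<in> ?E"
      then obtain c d where "closed c" "closed d" "a = X \<inter> c" "b = X \<inter> d" by auto
      then show "a \<inter> b \<in> ?E" by (intro image_eqI[where x="c \<inter> d"]) auto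
    qed
    show "sets M1 = sigma_sets X ?E" "sets M2 = sigma_sets X ?E"
      using sets1 sets2 generated by auto
    show "range (\<lambda>_. X) \<subseteq> ?E" by (auto intro!: image_eqI[where x=UNIV])
    show "emeasure M1 X \<noteq> \<infinity>" for i::nat
      using finite_measure.emeasure_finite[OF assms(1)] by simp
    fix A assume "A \<in> ?E"
    then have A: "closed A" "A \<subseteq> X" using assms(3) by auto
    show "emeasure M1 A = emeasure M2 A"
    proof (cases "A = {}")
      case False
      have "(\<lambda>m. integral\<^sup>L M1 (cutoff A m)) \<longlonglongrightarrow> measure M1 A"
        using integral_cutoff_tendsto_measure[OF assms(1) sets1 A False] .
      moreover have "(\<lambda>m. integral\<^sup>L M1 (cutoff A m)) \<longlonglongrightarrow> measure M2 A"
        using integral_cutoff_tendsto_measure[OF assms(2) sets2 A False]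
          integrals_eq[OF continuous_on_cutoff] by simp
      ultimately have "measure M1 A = measure M2 A" by (rule LIMSEQ_unique)
      moreover have "A \<in> sets M1" "A \<in> sets M2"
        using A sets1 sets2 closed_in_sets_restrict_borel by auto
      ultimately show ?thesis using assms(1,2) by (simp add: finite_measure.emeasure_eq_measure)
    qed simp
  qed auto
qed

section \<open>Invariant measures from orbit averages\<close>

locale krylov_bogolyubov =
  fixes X :: "'a::metric_space set" and T :: "'a \<Rightarrow> 'a"
    and y :: "nat \<Rightarrow> 'a" and N :: "nat \<Rightarrow> nat"
  assumes compact_X: "compact X" and X_nonempty: "X \<noteq> {}"
    and continuous_T: "continuous_on X T" and T_maps_X: "T ` X \<subseteq> X"
    and y_in_X: "\<And>j. y j \<in> X" and N_pos: "\<And>j. N j > 0"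
    and N_tendsto: "filterlim N at_top sequentially"
begin

definition orbit_avg :: "nat \<Rightarrow> ('a \<Rightarrow> real) \<Rightarrow> real" where
  "orbit_avg j h = (\<Sum>n<N j. h ((T ^^ n) (y j))) / real (N j)"

lemma orbit_in_X: "(T ^^ n) (y j) \<in> X"
  using funpow_mem[OF T_maps_X y_in_X] .

lemma orbit_avg_sum: "finite I \<Longrightarrow> orbit_avg j (\<lambda>x. \<Sum>i\<in>I. f i x) = (\<Sum>i\<in>I. orbit_avg j (f i))"
  unfolding orbit_avg_def by (subst sum.swap) (simp add: sum_divide_distrib)

lemma orbit_avg_cmult: "orbit_avg j (\<lambda>x. c * f x) = c * orbit_avg j f"
  unfolding orbit_avg_def by (simp add: sum_distrib_left)

lemma orbit_avg_diff: "orbit_avg j (\<lambda>x. f x - g x) = orbit_avg j f - orbit_avg j g"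
  unfolding orbit_avg_def by (simp add: sum_subtractf diff_divide_distrib)

lemma orbit_avg_mono: "(\<And>x. x \<in> X \<Longrightarrow> f x \<le> g x) \<Longrightarrow> orbit_avg j f \<le> orbit_avg j g"
  unfolding orbit_avg_def using orbit_in_X by (intro divide_right_mono sum_mono) auto

lemma abs_orbit_avg_le:
  assumes "\<And>x. x \<in> X \<Longrightarrow> \<bar>f x\<bar> \<le> e"
  shows "\<bar>orbit_avg j f\<bar> \<le> e"
proof -
  have "\<bar>\<Sum>n<N j. f ((T ^^ n) (y j))\<bar> \<le> (\<Sum>n<N j. e)"
    using assms orbit_in_X by (intro order.trans[OF sum_abs sum_mono]) auto
  then show ?thesis using N_pos[of j] by (simp add: orbit_avg_def divide_le_eq mult.commute)
qed

lemma orbit_avg_indicator_bounds: "0 \<le> orbit_avg j (indicator A)" "orbit_avg j (indicator A) \<le> 1"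
  using abs_orbit_avg_le[of "indicator A" 1 j] unfolding orbit_avg_def
  by (auto simp: sum_nonneg)

lemma orbit_avg_indicator_X: "orbit_avg j (indicator X) = 1"
  using N_pos[of j] orbit_in_X by (simp add: orbit_avg_def)

lemma ex_abs_bound:
  assumes "continuous_on X h"
  obtains B where "\<And>x. x \<in> X \<Longrightarrow> \<bar>h x :: real\<bar> \<le> B"
  using compact_imp_bounded[OF compact_continuous_image[OF assms compact_X]]
  unfolding bounded_real by auto

lemma orbit_avg_shift_tendsto_0:
  assumes h: "continuous_on X h" and r: "strict_mono r"
  shows "(\<lambda>j. orbit_avg (r j) (\<lambda>x. h (T x)) - orbit_avg (r j) h) \<longlonglongrightarrow> 0"
proof -
  obtain B where B: "\<And>x. x \<in> X \<Longrightarrow> \<bar>h x\<bar> \<le> B"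
    using ex_abs_bound[OF h] by blast
  have telescope: "orbit_avg j (\<lambda>x. h (T x)) - orbit_avg j h
      = (h ((T ^^ N j) (y j)) - h (y j)) / real (N j)" for j
  proof -
    have "orbit_avg j (\<lambda>x. h (T x)) - orbit_avg j h
        = (\<Sum>n<N j. h ((T ^^ Suc n) (y j)) - h ((T ^^ n) (y j))) / real (N j)"
      unfolding orbit_avg_def by (simp add: sum_subtractf diff_divide_distrib)
    also have "\<dots> = (h ((T ^^ N j) (y j)) - h (y j)) / real (N j)"
      by (subst sum_lessThan_telescope) simp
    finally show ?thesis .
  qed
  have bound: "\<bar>orbit_avg j (\<lambda>x. h (T x)) - orbit_avg j h\<bar> \<le> 2 * B / real (N j)" for j
  proof -
    have "\<bar>h ((T ^^ N j) (y j))\<bar> \<le> B" "\<bar>h (y j)\<bar> \<le> B"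
      using B orbit_in_X y_in_X by auto
    then have "\<bar>h ((T ^^ N j) (y j)) - h (y j)\<bar> \<le> 2 * B" by linarith
    then show ?thesis unfolding telescope by (simp add: abs_divide divide_right_mono)
  qed
  have "filterlim (\<lambda>j. real (N (r j))) at_top sequentially"
    using filterlim_compose[OF filterlim_real_sequentially
        filterlim_compose[OF N_tendsto filterlim_subseq[OF r]]]
    by (simp add: o_def)
  then have "(\<lambda>j. 2 * B / real (N (r j))) \<longlonglongrightarrow> 0"
    by (intro tendsto_divide_0[OF tendsto_const] filterlim_at_top_imp_at_infinity)
  then show ?thesis
    by (rule Lim_null_comparison[rotated]) (simp add: bound)
qed

text \<open>
  Level \<open>m\<close> of the construction is a finite \<open>mesh m\<close>-net of \<open>X\<close>; a point's address records, at
  each level, the first net point within distance \<open>mesh m\<close>, so the cells of addresses of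
  length \<open>Suc k\<close> have diameter less than \<open>2 * mesh k\<close> and refine each other.
\<close>

definition mesh :: "nat \<Rightarrow> real" where "mesh m = 1 / real (Suc m)"

lemma mesh_pos: "mesh m > 0" by (simp add: mesh_def)

lemma ex_mesh_less: "e > 0 \<Longrightarrow> \<exists>k. 2 * mesh k < e"
proof -
  assume e: "e > 0"
  obtain n :: nat where "2 / e < real n" using reals_Archimedean2 by blast
  then have "2 < e * real (Suc n)" using e by (simp add: field_simps)
  then have "2 * mesh n < e" using e by (simp add: mesh_def field_simps)
  then show ?thesis by blast
qed

definition net :: "nat \<Rightarrow> 'a list" where
  "net m = (SOME l. set l \<subseteq> X \<and> X \<subseteq> (\<Union>q\<in>set l. ball q (mesh m)))"

lemma net: "set (net m) \<subseteq> X" "X \<subseteq> (\<Union>q\<in>set (net m). ball q (mesh m))"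
proof -
  obtain t where t: "t \<subseteq> X" "finite t" "X \<subseteq> \<Union>((\<lambda>q. ball q (mesh m)) ` t)"
    by (rule compactE_image[OF compact_X, of X "\<lambda>q. ball q (mesh m)"]) (use mesh_pos in force)+
  then obtain l where "set l = t" using finite_list by blast
  then have "\<exists>l. set l \<subseteq> X \<and> X \<subseteq> (\<Union>q\<in>set l. ball q (mesh m))" using t by blast
  then show "set (net m) \<subseteq> X" "X \<subseteq> (\<Union>q\<in>set (net m). ball q (mesh m))"
    unfolding net_def by (metis (mono_tags, lifting) someI_ex)+
qed

lemma length_net_pos: "length (net m) > 0"
  using net[of m] X_nonempty by auto

definition net_index :: "nat \<Rightarrow> 'a \<Rightarrow> nat" where
  "net_index m x = (LEAST i. i < length (net m) \<and> dist x (net m ! i) < mesh m)"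

lemma net_index:
  assumes "x \<in> X"
  shows "net_index m x < length (net m)" "dist x (net m ! net_index m x) < mesh m"
proof -
  obtain q where "q \<in> set (net m)" "dist x q < mesh m"
    using net(2)[of m] assms by (auto simp: dist_commute)
  then obtain i where "i < length (net m) \<and> dist x (net m ! i) < mesh m"
    by (auto simp: in_set_conv_nth)
  then have "net_index m x < length (net m) \<and> dist x (net m ! net_index m x) < mesh m"
    unfolding net_index_def by (rule LeastI)
  then show "net_index m x < length (net m)" "dist x (net m ! net_index m x) < mesh m" by auto
qed

definition address :: "nat \<Rightarrow> 'a \<Rightarrow> nat list" where
  "address k x = map (\<lambda>m. net_index m x) [0..<k]"

lemma length_address[simp]: "length (address k x) = k"
  by (simp add: address_def)

lemma address_Suc: "address (Suc k) x = address k x @ [net_index k x]"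
  by (simp add: address_def)

lemma take_address: "m \<le> k \<Longrightarrow> take m (address k x) = address m x"
  by (simp add: address_def take_map)

definition cell :: "nat list \<Rightarrow> 'a set" where
  "cell s = {x\<in>X. address (length s) x = s}"

lemma cell_Nil[simp]: "cell [] = X"
  by (simp add: cell_def address_def)

lemma cell_subset: "cell s \<subseteq> X"
  by (auto simp: cell_def)

lemma in_cell_address: "x \<in> X \<Longrightarrow> x \<in> cell (address k x)"
  by (simp add: cell_def)

lemma cell_take: "x \<in> cell s \<Longrightarrow> m \<le> length s \<Longrightarrow> x \<in> cell (take m s)"
  by (auto simp: cell_def take_address[symmetric] min_def)

lemma dist_in_cell_less:
  assumes "x \<in> cell s" "z \<in> cell s" "length s = Suc k"
  shows "dist x z < 2 * mesh k"
proof -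
  have xz: "x \<in> X" "z \<in> X" "address (Suc k) x = s" "address (Suc k) z = s"
    using assms by (auto simp: cell_def)
  then have "net_index k x = net_index k z" using address_Suc[of k x] address_Suc[of k z] by auto
  then have "dist x (net k ! net_index k x) < mesh k" "dist z (net k ! net_index k x) < mesh k"
    using net_index(2)[OF xz(1), of k] net_index(2)[OF xz(2), of k] by metis+
  then show ?thesis using dist_triangle2[of x z "net k ! net_index k x"] by auto
qed

primrec addresses :: "nat \<Rightarrow> nat list set" where
  "addresses 0 = {[]}"
| "addresses (Suc k) = (\<lambda>(s, i). s @ [i]) ` (addresses k \<times> {..<length (net k)})"

lemma finite_addresses: "finite (addresses k)"
  by (induction k) auto

lemma length_addresses: "s \<in> addresses k \<Longrightarrow> length s = k"
  by (induction k arbitrary: s) auto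

lemma address_in_addresses: "x \<in> X \<Longrightarrow> address k x \<in> addresses k"
  by (induction k) (auto simp: address_Suc net_index address_def)

lemma addresses_SucE:
  assumes "s \<in> addresses (Suc k)"
  obtains s0 i where "s = s0 @ [i]" "s0 \<in> addresses k" "i < length (net k)"
  using assms by auto

lemma sum_addresses_indicator_cell:
  assumes "x \<in> X"
  shows "(\<Sum>s\<in>addresses k. g s * indicator (cell s) x) = (g (address k x) :: real)"
proof -
  have "(\<Sum>s\<in>addresses k. g s * indicator (cell s) x)
      = (\<Sum>s\<in>addresses k. if address k x = s then g s else 0)"
    using assms by (intro sum.cong) (auto simp: cell_def indicator_def length_addresses)
  also have "\<dots> = g (address k x)"
    using address_in_addresses[OF assms] finite_addresses by simp
  finally show ?thesis .
qed

lemma indicator_cell_split: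
  assumes "s \<in> addresses k"
  shows "indicator (cell s) x = (\<Sum>i<length (net k). indicator (cell (s @ [i])) x :: real)"
proof (cases "x \<in> cell s")
  case True
  then have x: "x \<in> X" "address k x = s" using length_addresses[OF assms] by (auto simp: cell_def)
  have "(\<Sum>i<length (net k). indicator (cell (s @ [i])) x :: real)
      = (\<Sum>i<length (net k). if i = net_index k x then 1 else 0)"
    using x length_addresses[OF assms]
    by (intro sum.cong) (auto simp: cell_def address_Suc indicator_def)
  also have "\<dots> = 1" using net_index(1)[OF x(1)] by simp
  finally show ?thesis using True by simp
next
  case False
  then have "x \<notin> cell (s @ [i])" for i
    using cell_take[of x "s @ [i]" "length s"] by auto
  then show ?thesis using False by simp
qed

lemma ex_subseq_cell_avgs_convergent:
  "\<exists>r. strict_mono r \<and> (\<forall>s. convergent (\<lambda>j. orbit_avg (r j) (indicator (cell s))))"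
proof -
  define P where "P = (\<lambda>n (r::nat\<Rightarrow>nat).
    convergent (\<lambda>j. orbit_avg (r j) (indicator (cell (from_nat n :: nat list)))))"
  interpret subseqs P
  proof
    fix n and s :: "nat \<Rightarrow> nat"
    have "bounded (range (\<lambda>j. orbit_avg (s j) (indicator (cell (from_nat n :: nat list)))))"
      by (rule bounded_subset[of "{0..1}"]) (use orbit_avg_indicator_bounds in auto)
    then obtain l r where "strict_mono r"
      "((\<lambda>j. orbit_avg (s j) (indicator (cell (from_nat n :: nat list)))) \<circ> r) \<longlonglongrightarrow> l"
      using bounded_imp_convergent_subsequence by blast
    then show "\<exists>r'. strict_mono r' \<and> P n (s \<circ> r')"
      unfolding P_def by (auto simp: convergent_def o_def)
  qed
  have "P k diagseq" for k
  proof -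
    define F where "F = (\<lambda>m. orbit_avg m (indicator (cell (from_nat k :: nat list))))"
    have "P k (diagseq \<circ> (+) (Suc k))"
      by (rule diagseq_holds) (auto simp: P_def o_def intro: convergent_subseq_convergent[unfolded o_def])
    then have "convergent (\<lambda>j. F (diagseq (j + Suc k)))"
      by (simp add: P_def F_def o_def add.commute)
    then have "convergent (\<lambda>j. F (diagseq j))"
      using convergent_ignore_initial_segment[where m="Suc k" and f="\<lambda>j. F (diagseq j)"] by simp
    then show ?thesis by (simp add: P_def F_def)
  qed
  then have "convergent (\<lambda>j. orbit_avg (diagseq j) (indicator (cell s)))" for s
    unfolding P_def using from_nat_to_nat[of s] by metis
  then show ?thesis using subseq_diagseq by blast
qed

definition conv_subseq :: "nat \<Rightarrow> nat" where
  "conv_subseq = (SOME r. strict_mono r \<and> (\<forall>s. convergent (\<lambda>j. orbit_avg (r j) (indicator (cell s)))))"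

lemma conv_subseq:
  "strict_mono conv_subseq" "convergent (\<lambda>j. orbit_avg (conv_subseq j) (indicator (cell s)))"
  using someI_ex[OF ex_subseq_cell_avgs_convergent] unfolding conv_subseq_def by auto

definition weight :: "nat list \<Rightarrow> real" where
  "weight s = lim (\<lambda>j. orbit_avg (conv_subseq j) (indicator (cell s)))"

lemma weight_tendsto: "(\<lambda>j. orbit_avg (conv_subseq j) (indicator (cell s))) \<longlonglongrightarrow> weight s"
  using conv_subseq(2) unfolding weight_def by (simp add: convergent_LIMSEQ_iff)

lemma weight_nonneg: "0 \<le> weight s"
  using weight_tendsto[of s] orbit_avg_indicator_bounds by (intro LIMSEQ_le_const) auto

lemma weight_Nil: "weight [] = 1"
  using weight_tendsto[of "[]"] orbit_avg_indicator_X by (simp add: LIMSEQ_const_iff)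

lemma weight_split: "s \<in> addresses k \<Longrightarrow> weight s = (\<Sum>i<length (net k). weight (s @ [i]))"
proof -
  assume s: "s \<in> addresses k"
  have "orbit_avg j (indicator (cell s)) = (\<Sum>i<length (net k). orbit_avg j (indicator (cell (s @ [i]))))" for j
    using orbit_avg_sum[of "{..<length (net k)}" j "\<lambda>i. indicator (cell (s @ [i]))"]
    by (simp add: indicator_cell_split[OF s, abs_def])
  then have "(\<lambda>j. orbit_avg (conv_subseq j) (indicator (cell s))) \<longlonglongrightarrow> (\<Sum>i<length (net k). weight (s @ [i]))"
    by (simp only:) (intro tendsto_sum weight_tendsto)
  then show ?thesis using weight_tendsto LIMSEQ_unique by blast
qed

lemma weight_pos_imp_cell_nonempty: "weight s > 0 \<Longrightarrow> cell s \<noteq> {}"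
  using weight_tendsto[of s] by (auto simp: orbit_avg_def LIMSEQ_const_iff)

lemma sum_weight_le:
  assumes "s \<in> addresses k" "i < length (net k)"
  shows "(\<Sum>i'<Suc i. weight (s @ [i'])) \<le> weight s"
proof -
  have "(\<Sum>i'<Suc i. weight (s @ [i'])) \<le> (\<Sum>i'<length (net k). weight (s @ [i']))"
    using assms(2) weight_nonneg by (intro sum_mono2) auto
  then show ?thesis using weight_split[OF assms(1)] by simp
qed

text \<open>
  The limit measure is the image of Lebesgue measure on \<open>[0,1)\<close> under \<open>limit_point\<close>:
  \<open>[0,1)\<close> is cut recursively into consecutive intervals \<open>[offset s, offset s + weight s)\<close>,
  one per address \<open>s\<close>, and \<open>limit_point t\<close> is the limit of points in the nested cells whose
  intervals contain \<open>t\<close>.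
\<close>

definition offset :: "nat list \<Rightarrow> real" where
  "offset s = (\<Sum>m<length s. \<Sum>i'<s ! m. weight (take m s @ [i']))"

lemma offset_Nil[simp]: "offset [] = 0"
  by (simp add: offset_def)

lemma offset_snoc: "offset (s @ [i]) = offset s + (\<Sum>i'<i. weight (s @ [i']))"
proof -
  have "(\<Sum>m<length s. \<Sum>i'<(s @ [i]) ! m. weight (take m (s @ [i]) @ [i'])) = offset s"
    unfolding offset_def by (intro sum.cong) (auto simp: nth_append)
  then show ?thesis by (simp add: offset_def)
qed

lemma offset_bounds: "s \<in> addresses k \<Longrightarrow> 0 \<le> offset s \<and> offset s + weight s \<le> 1"
proof (induction k arbitrary: s)
  case (Suc k)
  then obtain s0 i where s: "s = s0 @ [i]" "s0 \<in> addresses k" "i < length (net k)"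
    by (auto elim: addresses_SucE)
  have "offset s + weight s = offset s0 + (\<Sum>i'<Suc i. weight (s0 @ [i']))"
    by (simp add: s offset_snoc)
  also have "\<dots> \<le> offset s0 + weight s0"
    using sum_weight_le[OF s(2,3)] by simp
  finally show ?case using Suc.IH[OF s(2)]
    by (auto simp: s offset_snoc intro!: add_nonneg_nonneg sum_nonneg weight_nonneg)
qed (simp add: weight_Nil)

primrec address_at :: "nat \<Rightarrow> real \<Rightarrow> nat list" where
  "address_at 0 t = []"
| "address_at (Suc k) t = address_at k t @
     [LEAST i. t < offset (address_at k t) + (\<Sum>i'<Suc i. weight (address_at k t @ [i']))]"

lemma length_address_at[simp]: "length (address_at k t) = k"
  by (induction k) auto

lemma take_address_at: "m \<le> k \<Longrightarrow> take m (address_at k t) = address_at m t"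
  by (induction k) (auto simp: le_Suc_eq)

lemma address_at_in_interval:
  assumes "t \<in> {0..<1}"
  shows "address_at k t \<in> addresses k \<and> offset (address_at k t) \<le> t
    \<and> t < offset (address_at k t) + weight (address_at k t)"
proof (induction k)
  case (Suc k)
  define s where "s = address_at k t"
  define L where "L = length (net k)"
  define Q where "Q = (\<lambda>i. t < offset s + (\<Sum>i'<Suc i. weight (s @ [i'])))"
  define i where "i = (LEAST i. Q i)"
  have IH: "s \<in> addresses k" "offset s \<le> t" "t < offset s + weight s"
    using Suc by (auto simp: s_def)
  have L: "Suc (L - 1) = L" using length_net_pos by (simp add: L_def)
  have "Q (L - 1)" unfolding Q_def L by (use IH weight_split[OF IH(1)] in \<open>simp add: L_def\<close>)
  then have Qi: "Q i" and iL: "i < L" unfolding i_def using L by (auto intro: LeastI Least_le le_less_trans)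
  have "offset (s @ [i]) \<le> t"
  proof (cases i)
    case (Suc i0)
    then have "\<not> Q i0" using not_less_Least[of i0 Q] by (simp add: i_def)
    then show ?thesis using Suc by (simp add: Q_def offset_snoc)
  qed (use IH in \<open>simp add: offset_snoc\<close>)
  moreover have "s @ [i] \<in> addresses (Suc k)" using IH(1) iL by (auto simp: L_def)
  moreover have "t < offset (s @ [i]) + weight (s @ [i])" using Qi by (simp add: Q_def offset_snoc)
  moreover have "address_at (Suc k) t = s @ [i]" by (simp add: s_def i_def Q_def)
  ultimately show ?case by (simp only:)
qed (use assms in \<open>simp add: weight_Nil\<close>)

lemma address_at_eq_iff:
  assumes "s \<in> addresses k" "t \<in> {0..<1}"
  shows "address_at k t = s \<longleftrightarrow> offset s \<le> t \<and> t < offset s + weight s"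
proof
  assume "offset s \<le> t \<and> t < offset s + weight s"
  with assms(1) show "address_at k t = s"
  proof (induction k arbitrary: s)
    case (Suc k)
    then obtain s0 i where s: "s = s0 @ [i]" "s0 \<in> addresses k" "i < length (net k)"
      by (auto elim: addresses_SucE)
    have t: "offset s0 + (\<Sum>i'<i. weight (s0 @ [i'])) \<le> t" "t < offset s0 + (\<Sum>i'<Suc i. weight (s0 @ [i']))"
      using Suc.prems by (auto simp: s offset_snoc)
    then have "offset s0 \<le> t \<and> t < offset s0 + weight s0"
      using sum_weight_le[OF s(2,3)] sum_nonneg[of "{..<i}" "\<lambda>i'. weight (s0 @ [i'])"] weight_nonneg
      by force
    then have s0: "address_at k t = s0" using Suc.IH[OF s(2)] by blast
    have "(LEAST i'. t < offset s0 + (\<Sum>i''<Suc i'. weight (s0 @ [i'']))) = i"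
    proof (rule Least_equality)
      fix i' assume "t < offset s0 + (\<Sum>i''<Suc i'. weight (s0 @ [i'']))"
      then show "i \<le> i'"
        using t(1) sum_mono2[of "{..<i}" "{..<Suc i'}" "\<lambda>i''. weight (s0 @ [i''])"] weight_nonneg
        by (cases "i \<le> i'") auto
    qed (use t in simp)
    then show ?case using s0 s by simp
  qed simp
qed (use address_at_in_interval[OF assms(2)] in auto)

definition cell_point :: "nat list \<Rightarrow> 'a" where
  "cell_point s = (SOME x. x \<in> cell s)"

lemma cell_point_in_cell: "cell s \<noteq> {} \<Longrightarrow> cell_point s \<in> cell s"
  unfolding cell_point_def by (rule someI_ex) auto

lemma cell_point_address_at: "t \<in> {0..<1} \<Longrightarrow> cell_point (address_at k t) \<in> cell (address_at k t)"
  using cell_point_in_cell weight_pos_imp_cell_nonempty address_at_in_interval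
  by (metis add_le_same_cancel1 linorder_not_le order_le_less_trans)

lemma cell_address_at_mono:
  "m \<le> k \<Longrightarrow> x \<in> cell (address_at k t) \<Longrightarrow> x \<in> cell (address_at m t)"
  using cell_take[of x "address_at k t" m] take_address_at[of m k t] by simp

lemma dist_cell_point_address_at:
  assumes "t \<in> {0..<1}" "x \<in> cell (address_at (Suc k) t)" "m \<ge> Suc k"
  shows "dist (cell_point (address_at m t)) x < 2 * mesh k"
  using dist_in_cell_less[of "cell_point (address_at m t)" "address_at (Suc k) t" x k] assms
    cell_address_at_mono[OF assms(3) cell_point_address_at[OF assms(1)]] by simp

definition limit_point :: "real \<Rightarrow> 'a" where
  "limit_point t = (if t \<in> {0..<1} then lim (\<lambda>m. cell_point (address_at m t)) else y 0)"

lemma limit_point_tendsto: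
  assumes t: "t \<in> {0..<1}"
  shows "(\<lambda>m. cell_point (address_at m t)) \<longlonglongrightarrow> limit_point t"
proof -
  have in_X: "\<forall>m. cell_point (address_at m t) \<in> X"
    using cell_point_address_at[OF t] cell_subset by blast
  have "Cauchy (\<lambda>m. cell_point (address_at m t))"
  proof (rule metric_CauchyI)
    fix e :: real assume "e > 0"
    then obtain k where k: "2 * mesh k < e" using ex_mesh_less by blast
    have "dist (cell_point (address_at m t)) (cell_point (address_at n t)) < e"
      if "Suc k \<le> m" "Suc k \<le> n" for m n
      using dist_cell_point_address_at[OF t cell_address_at_mono[OF that(2) cell_point_address_at[OF t]] that(1)] k
      by simp
    then show "\<exists>M. \<forall>m\<ge>M. \<forall>n\<ge>M. dist (cell_point (address_at m t)) (cell_point (address_at n t)) < e"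
      by blast
  qed
  then obtain l where "(\<lambda>m. cell_point (address_at m t)) \<longlonglongrightarrow> l"
    using compact_imp_complete[OF compact_X, unfolded complete_def, rule_format, OF conjI[OF in_X]]
    by blast
  then show ?thesis using t by (simp add: limit_point_def limI)
qed

lemma limit_point_in_X: "limit_point t \<in> X"
proof (cases "t \<in> {0..<1}")
  case True
  then show ?thesis
    using closed_sequentially[OF compact_imp_closed[OF compact_X] _ limit_point_tendsto[OF True]]
      cell_point_address_at[OF True] cell_subset by blast
qed (auto simp: limit_point_def y_in_X)

lemma dist_limit_point_le:
  assumes t: "t \<in> {0..<1}" and x: "x \<in> cell (address_at (Suc k) t)"
  shows "dist (limit_point t) x \<le> 2 * mesh k"
proof (rule LIMSEQ_le_const2)
  show "(\<lambda>m. dist (cell_point (address_at m t)) x) \<longlonglongrightarrow> dist (limit_point t) x"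
    by (intro tendsto_intros limit_point_tendsto[OF t])
  show "\<exists>N. \<forall>m\<ge>N. dist (cell_point (address_at m t)) x \<le> 2 * mesh k"
    using dist_cell_point_address_at[OF t x] by (intro exI[of _ "Suc k"]) (auto intro: less_imp_le)
qed

definition unit_lebesgue :: "real measure" where
  "unit_lebesgue = restrict_space lborel {0..<1}"

lemma space_unit_lebesgue[simp]: "space unit_lebesgue = {0..<1}"
  by (simp add: unit_lebesgue_def space_restrict_space)

lemma prob_space_unit_lebesgue: "prob_space unit_lebesgue"
  by standard (simp add: unit_lebesgue_def emeasure_restrict_space)

lemma interval_in_sets_unit_lebesgue: "0 \<le> a \<Longrightarrow> b \<le> 1 \<Longrightarrow> {a..<b} \<in> sets unit_lebesgue"
  by (auto simp: unit_lebesgue_def sets_restrict_space_iff)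

lemma measure_unit_lebesgue_interval:
  "0 \<le> a \<Longrightarrow> a \<le> b \<Longrightarrow> b \<le> 1 \<Longrightarrow> measure unit_lebesgue {a..<b} = b - a"
  by (simp add: unit_lebesgue_def measure_restrict_space)

lemma vimage_address_at:
  assumes "s \<in> addresses k"
  shows "address_at k -` {s} \<inter> space unit_lebesgue = {offset s..<offset s + weight s}"
  using address_at_eq_iff[OF assms] offset_bounds[OF assms] by fastforce

lemma measurable_address_at: "address_at k \<in> measurable unit_lebesgue (count_space UNIV)"
proof (rule measurable_count_space_eq2_countable[THEN iffD2], intro conjI ballI)
  fix s :: "nat list"
  show "address_at k -` {s} \<inter> space unit_lebesgue \<in> sets unit_lebesgue"
  proof (cases "s \<in> addresses k")
    case True
    then show ?thesis
      using vimage_address_at offset_bounds interval_in_sets_unit_lebesgue by simp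
  next
    case False
    then have "address_at k -` {s} \<inter> space unit_lebesgue = {}"
      using address_at_in_interval by auto
    then show ?thesis by simp
  qed
qed simp

lemma measurable_limit_point: "limit_point \<in> measurable unit_lebesgue (restrict_space borel X)"
proof (rule measurable_restrict_space2)
  show "limit_point \<in> space unit_lebesgue \<rightarrow> X" using limit_point_in_X by auto
  have "(\<lambda>t. cell_point (address_at k t)) \<in> borel_measurable unit_lebesgue" for k
    using measurable_compose[OF measurable_address_at, of cell_point borel]
    by (simp add: measurable_count_space)
  then show "limit_point \<in> borel_measurable unit_lebesgue"
    by (rule borel_measurable_LIMSEQ_metric[where f="\<lambda>i t. cell_point (address_at i t)"])
      (use limit_point_tendsto in auto)
qed

definition limit_measure :: "'a measure" where
  "limit_measure = distr unit_lebesgue (restrict_space borel X) limit_point"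

lemma prob_space_limit_measure: "prob_space limit_measure"
  unfolding limit_measure_def
  by (intro prob_space.prob_space_distr prob_space_unit_lebesgue measurable_limit_point)

lemma sets_limit_measure: "sets limit_measure = sets (restrict_space borel X)"
  by (simp add: limit_measure_def)

lemma space_limit_measure: "space limit_measure = X"
  by (simp add: limit_measure_def space_restrict_space)

lemma integral_cell_point_address_at:
  fixes g :: "'a \<Rightarrow> real"
  shows "integral\<^sup>L unit_lebesgue (\<lambda>t. g (cell_point (address_at k t)))
    = (\<Sum>s\<in>addresses k. g (cell_point s) * weight s)"
proof -
  interpret prob_space unit_lebesgue by (rule prob_space_unit_lebesgue)
  let ?I = "\<lambda>s. {offset s..<offset s + weight s}"
  have I: "?I s \<in> sets unit_lebesgue" "?I s \<subseteq> space unit_lebesgue"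
    if "s \<in> addresses k" for s
    using offset_bounds[OF that] interval_in_sets_unit_lebesgue weight_nonneg[of s] by auto
  have "integral\<^sup>L unit_lebesgue (\<lambda>t. g (cell_point (address_at k t)))
      = integral\<^sup>L unit_lebesgue (\<lambda>t. \<Sum>s\<in>addresses k. g (cell_point s) * indicator (?I s) t)"
  proof (rule Bochner_Integration.integral_cong[OF refl])
    fix t assume t: "t \<in> space unit_lebesgue"
    have "(\<Sum>s\<in>addresses k. g (cell_point s) * indicator (?I s) t)
        = (\<Sum>s\<in>addresses k. if address_at k t = s then g (cell_point s) else 0)"
      using address_at_eq_iff t by (intro sum.cong) (auto simp: indicator_def)
    also have "\<dots> = g (cell_point (address_at k t))"
      using address_at_in_interval[of t k] t finite_addresses[of k] by (simp add: sum.delta)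
    finally show "g (cell_point (address_at k t))
        = (\<Sum>s\<in>addresses k. g (cell_point s) * indicator (?I s) t)" ..
  qed
  also have "\<dots> = (\<Sum>s\<in>addresses k. integral\<^sup>L unit_lebesgue (\<lambda>t. g (cell_point s) * indicator (?I s) t))"
    using I(1) by (intro Bochner_Integration.integral_sum integrable_mult_right integrable_real_indicator)
      (auto simp: less_top[symmetric])
  also have "\<dots> = (\<Sum>s\<in>addresses k. g (cell_point s) * measure unit_lebesgue (?I s))"
  proof (rule sum.cong[OF refl])
    fix s assume "s \<in> addresses k"
    then have "?I s \<inter> space unit_lebesgue = ?I s" using I(2) by blast
    then show "integral\<^sup>L unit_lebesgue (\<lambda>t. g (cell_point s) * indicator (?I s) t)
        = g (cell_point s) * measure unit_lebesgue (?I s)"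
      by (simp only: integral_mult_right_zero Bochner_Integration.integral_indicator)
  qed
  also have "\<dots> = (\<Sum>s\<in>addresses k. g (cell_point s) * weight s)"
    using measure_unit_lebesgue_interval offset_bounds weight_nonneg by (intro sum.cong) auto
  finally show ?thesis .
qed

lemma integral_limit_measure_approx:
  assumes h: "continuous_on X h"
    and modulus: "\<And>x x'. x \<in> X \<Longrightarrow> x' \<in> X \<Longrightarrow> dist x x' \<le> 2 * mesh k \<Longrightarrow> \<bar>h x - h x'\<bar> \<le> e"
  shows "\<bar>integral\<^sup>L limit_measure h - (\<Sum>s\<in>addresses (Suc k). h (cell_point s) * weight s)\<bar> \<le> e"
proof -
  interpret prob_space unit_lebesgue by (rule prob_space_unit_lebesgue)
  obtain B where B: "\<And>x. x \<in> X \<Longrightarrow> \<bar>h x\<bar> \<le> B"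
    using ex_abs_bound[OF h] by blast
  have h_meas: "h \<in> borel_measurable (restrict_space borel X)"
    using h by (rule borel_measurable_continuous_on_restrict)
  let ?g = "\<lambda>t. h (cell_point (address_at (Suc k) t))"
  have cell_point_in_X: "cell_point (address_at (Suc k) t) \<in> X" if "t \<in> {0..<1}" for t
    using cell_point_address_at[OF that] cell_subset by blast
  have "integral\<^sup>L limit_measure h = integral\<^sup>L unit_lebesgue (\<lambda>t. h (limit_point t))"
    unfolding limit_measure_def by (rule integral_distr[OF measurable_limit_point h_meas])
  moreover have "\<bar>integral\<^sup>L unit_lebesgue (\<lambda>t. h (limit_point t)) - integral\<^sup>L unit_lebesgue ?g\<bar> \<le> e"
  proof (rule abs_integral_diff_le[OF prob_space_unit_lebesgue])
    show "integrable unit_lebesgue (\<lambda>t. h (limit_point t))"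
    proof (rule integrable_const_bound[where B=B])
      show "AE t in unit_lebesgue. norm (h (limit_point t)) \<le> B"
        using B limit_point_in_X by (intro AE_I2) (simp only: real_norm_def)
      show "(\<lambda>t. h (limit_point t)) \<in> borel_measurable unit_lebesgue"
        using measurable_compose[OF measurable_limit_point h_meas] .
    qed
    show "integrable unit_lebesgue ?g"
    proof (rule integrable_const_bound[where B=B])
      show "AE t in unit_lebesgue. norm (?g t) \<le> B"
        using B cell_point_in_X by (intro AE_I2) (simp only: real_norm_def space_unit_lebesgue)
      show "?g \<in> borel_measurable unit_lebesgue"
        by (rule measurable_compose[OF measurable_address_at]) simp
    qed
    fix t assume "t \<in> space unit_lebesgue"
    then show "\<bar>h (limit_point t) - ?g t\<bar> \<le> e"
      using modulus[OF limit_point_in_X cell_point_in_X]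
        dist_limit_point_le[OF _ cell_point_address_at] by simp
  qed
  ultimately show ?thesis by (simp only: integral_cell_point_address_at)
qed

lemma orbit_avg_approx:
  assumes modulus: "\<And>x x'. x \<in> X \<Longrightarrow> x' \<in> X \<Longrightarrow> dist x x' \<le> 2 * mesh k \<Longrightarrow> \<bar>h x - h x'\<bar> \<le> e"
  shows "\<bar>orbit_avg j h - (\<Sum>s\<in>addresses (Suc k). h (cell_point s) * orbit_avg j (indicator (cell s)))\<bar> \<le> e"
proof -
  have "orbit_avg j h - (\<Sum>s\<in>addresses (Suc k). h (cell_point s) * orbit_avg j (indicator (cell s)))
      = orbit_avg j (\<lambda>x. h x - (\<Sum>s\<in>addresses (Suc k). h (cell_point s) * indicator (cell s) x))"
    by (simp add: orbit_avg_diff orbit_avg_sum[OF finite_addresses] orbit_avg_cmult del: addresses.simps)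
  also have "\<bar>\<dots>\<bar> \<le> e"
  proof (rule abs_orbit_avg_le)
    fix x assume x: "x \<in> X"
    let ?s = "address (Suc k) x"
    have "x \<in> cell ?s" "cell_point ?s \<in> cell ?s"
      using in_cell_address[OF x] cell_point_in_cell by auto
    then have "\<bar>h x - h (cell_point ?s)\<bar> \<le> e"
      using modulus[OF x] cell_subset dist_in_cell_less[of x ?s "cell_point ?s" k] by force
    then show "\<bar>h x - (\<Sum>s\<in>addresses (Suc k). h (cell_point s) * indicator (cell s) x)\<bar> \<le> e"
      by (simp only: sum_addresses_indicator_cell[OF x])
  qed
  finally show ?thesis .
qed

lemma orbit_avg_tendsto_integral:
  assumes h: "continuous_on X h"
  shows "(\<lambda>j. orbit_avg (conv_subseq j) h) \<longlonglongrightarrow> integral\<^sup>L limit_measure h"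
proof (rule LIMSEQ_I)
  fix e :: real assume "e > 0"
  then have e: "e/3 > 0" by simp
  obtain d where d: "d > 0" "\<And>x x'. x \<in> X \<Longrightarrow> x' \<in> X \<Longrightarrow> dist x' x < d \<Longrightarrow> \<bar>h x' - h x\<bar> < e/3"
    using compact_uniformly_continuous[OF h compact_X] e
    unfolding uniformly_continuous_on_def dist_real_def by blast
  obtain k where k: "2 * mesh k < d" using ex_mesh_less[OF d(1)] by blast
  have modulus: "\<bar>h x - h x'\<bar> \<le> e/3" if "x \<in> X" "x' \<in> X" "dist x x' \<le> 2 * mesh k" for x x'
    using d(2)[OF that(2,1)] that(3) k by (simp add: dist_commute)
  let ?S = "\<lambda>j. \<Sum>s\<in>addresses (Suc k). h (cell_point s) * orbit_avg (conv_subseq j) (indicator (cell s))"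
  have "?S \<longlonglongrightarrow> (\<Sum>s\<in>addresses (Suc k). h (cell_point s) * weight s)"
    by (intro tendsto_sum tendsto_mult_left weight_tendsto)
  then obtain j0 where j0: "\<forall>j\<ge>j0.
      norm (?S j - (\<Sum>s\<in>addresses (Suc k). h (cell_point s) * weight s)) < e/3"
    using LIMSEQ_D[OF _ e] by blast
  have triangle: "\<bar>a - i\<bar> < e" if "\<bar>a - s\<bar> \<le> e/3" "\<bar>s - w\<bar> < e/3" "\<bar>i - w\<bar> \<le> e/3"
    for a s w i :: real
    using that unfolding abs_le_iff abs_less_iff by linarith
  have "\<bar>orbit_avg (conv_subseq j) h - integral\<^sup>L limit_measure h\<bar> < e" if "j \<ge> j0" for j
    using triangle[OF orbit_avg_approx[OF modulus] j0[rule_format, OF that, unfolded real_norm_def] integral_limit_measure_approx[OF h modulus]] .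
  then show "\<exists>j0. \<forall>j\<ge>j0. norm (orbit_avg (conv_subseq j) h - integral\<^sup>L limit_measure h) < e"
    by (auto simp only: real_norm_def)
qed

lemma measurable_T_limit_measure: "T \<in> measurable limit_measure limit_measure"
proof -
  have "T \<in> measurable (restrict_space borel X) (restrict_space borel X)"
    using T_maps_X borel_measurable_continuous_on_restrict[OF continuous_T]
    by (intro measurable_restrict_space2) (auto simp: space_restrict_space)
  then show ?thesis
    by (simp add: measurable_cong_sets[OF sets_limit_measure sets_limit_measure])
qed

lemma integral_limit_measure_comp_T:
  fixes h :: "'a \<Rightarrow> real"
  assumes h: "continuous_on X h"
  shows "integral\<^sup>L limit_measure (\<lambda>x. h (T x)) = integral\<^sup>L limit_measure h"
proof -
  have hT: "continuous_on X (\<lambda>x. h (T x))"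
    using continuous_on_compose[OF continuous_T continuous_on_subset[OF h T_maps_X]] by (simp add: o_def)
  have "(\<lambda>j. orbit_avg (conv_subseq j) h
      + (orbit_avg (conv_subseq j) (\<lambda>x. h (T x)) - orbit_avg (conv_subseq j) h))
      \<longlonglongrightarrow> integral\<^sup>L limit_measure h + 0"
    by (intro tendsto_add orbit_avg_tendsto_integral[OF h] orbit_avg_shift_tendsto_0[OF h conv_subseq(1)])
  then show ?thesis using orbit_avg_tendsto_integral[OF hT] LIMSEQ_unique by fastforce
qed

lemma invariant_prob_limit_measure: "invariant_prob X T limit_measure"
  unfolding invariant_prob_def
proof (intro conjI prob_space_limit_measure sets_limit_measure space_limit_measure
    measurable_T_limit_measure measure_eqI_continuous_integrals)
  show "finite_measure (distr limit_measure limit_measure T)" "finite_measure limit_measure"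
    using prob_space.prob_space_distr[OF prob_space_limit_measure measurable_T_limit_measure]
      prob_space_limit_measure
    by (auto simp: prob_space_def)
  fix h :: "'a \<Rightarrow> real" assume h: "continuous_on X h"
  have "h \<in> borel_measurable limit_measure"
    using borel_measurable_continuous_on_restrict[OF h]
    by (simp add: measurable_cong_sets[OF sets_limit_measure refl])
  then show "integral\<^sup>L (distr limit_measure limit_measure T) h = integral\<^sup>L limit_measure h"
    using integral_limit_measure_comp_T[OF h] by (simp add: integral_distr[OF measurable_T_limit_measure])
qed (use compact_imp_closed[OF compact_X] sets_limit_measure in auto)

lemma ex_invariant_prob_ge_visit_frequency:
  assumes "closed F" "F \<subseteq> X" "\<And>j. c < orbit_avg j (indicator F)"
  shows "\<exists>\<nu>. invariant_prob X T \<nu> \<and> c \<le> measure \<nu> F"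
proof (intro exI[of _ limit_measure] conjI invariant_prob_limit_measure)
  show "c \<le> measure limit_measure F"
  proof (cases "F = {}")
    case True
    then show ?thesis using assms(3)[of 0] by (simp add: orbit_avg_def)
  next
    case False
    have "c \<le> orbit_avg (conv_subseq j) (cutoff F m)" for j m
      using assms(3)[of "conv_subseq j"] orbit_avg_mono[of "indicator F" "cutoff F m" "conv_subseq j", OF indicator_le_cutoff]
      by linarith
    then have "c \<le> integral\<^sup>L limit_measure (cutoff F m)" for m
      by (intro LIMSEQ_le_const[OF orbit_avg_tendsto_integral[OF continuous_on_cutoff]]) auto
    moreover have "(\<lambda>m. integral\<^sup>L limit_measure (cutoff F m)) \<longlonglongrightarrow> measure limit_measure F"
      using prob_space_limit_measure sets_limit_measure assms(1,2) False
      by (intro integral_cutoff_tendsto_measure) (auto simp: prob_space_def)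
    ultimately show ?thesis by (intro LIMSEQ_le_const) auto
  qed
qed

end

section \<open>Upper Banach density\<close>

lemma subadditive_le_mult_add:
  fixes a :: "nat \<Rightarrow> real"
  assumes "\<And>m n. a (m + n) \<le> a m + a n"
  shows "a (q * m + r) \<le> real q * a m + a r"
proof (induction q)
  case (Suc q)
  have "a (Suc q * m + r) \<le> a m + a (q * m + r)"
    using assms[of m "q * m + r"] by (simp add: add.assoc)
  then show ?case using Suc by (simp add: algebra_simps)
qed simp

lemma subadditive_div_le:
  fixes a :: "nat \<Rightarrow> real"
  assumes sub: "\<And>m n. a (m + n) \<le> a m + a n" and nonneg: "\<And>n. a n \<ge> 0"
    and "m \<ge> 1" "n \<ge> 1"
  shows "a n / real n \<le> a m / real m + (\<Sum>r<m. a r) / real n"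
proof -
  define q where "q = n div m"
  have n: "n = q * m + n mod m" by (simp add: q_def)
  have "a (n mod m) \<le> (\<Sum>r<m. a r)"
    using nonneg \<open>m \<ge> 1\<close> by (intro member_le_sum) auto
  then have "a n \<le> real q * a m + (\<Sum>r<m. a r)"
    using subadditive_le_mult_add[OF sub, of q m "n mod m"] n by simp
  also have "real q * a m \<le> real n * (a m / real m)"
  proof -
    have "q * m \<le> n" using n by linarith
    then have "real q * real m \<le> real n" by (metis of_nat_le_iff of_nat_mult)
    then have "real q * real m * a m \<le> real n * a m" using nonneg by (rule mult_right_mono)
    then show ?thesis using \<open>m \<ge> 1\<close> by (simp add: field_simps)
  qed
  finally show ?thesis using \<open>n \<ge> 1\<close> by (simp add: field_simps)
qed

lemma Fekete_subadditive_convergent: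
  fixes a :: "nat \<Rightarrow> real"
  assumes sub: "\<And>m n. a (m + n) \<le> a m + a n" and nonneg: "\<And>n. a n \<ge> 0"
  shows "convergent (\<lambda>n. a n / real n)"
proof -
  define L where "L = (INF n\<in>{1..}. a n / real n)"
  have bdd: "bdd_below ((\<lambda>n. a n / real n) ` {1..})"
    using nonneg by (intro bdd_belowI[of _ 0]) auto
  have "(\<lambda>n. a n / real n) \<longlonglongrightarrow> L"
  proof (rule LIMSEQ_I)
    fix e :: real assume e: "e > 0"
    have "\<exists>m\<in>{1..}. a m / real m < L + e/2"
      using cINF_less_iff[OF _ bdd, of "L + e/2"] e unfolding L_def by auto
    then obtain m where m: "m \<ge> 1" "a m / real m < L + e/2" by auto
    obtain n0 :: nat where n0: "(\<Sum>r<m. a r) / (e/2) < real n0" using reals_Archimedean2 by blast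
    have "\<bar>a n / real n - L\<bar> < e" if n: "n \<ge> max n0 1" for n
    proof -
      have "(\<Sum>r<m. a r) / (e/2) < real n" using n n0 by linarith
      then have "(\<Sum>r<m. a r) / real n < e/2" using n e by (simp add: field_simps)
      moreover have "L \<le> a n / real n" unfolding L_def using n bdd by (intro cINF_lower) auto
      ultimately show ?thesis
        using subadditive_div_le[OF sub nonneg m(1), of n] m(2) n unfolding abs_less_iff by linarith
    qed
    then show "\<exists>n0. \<forall>n\<ge>n0. norm (a n / real n - L) < e"
      by (intro exI[of _ "max n0 1"]) simp
  qed
  then show ?thesis by (auto simp: convergent_def)
qed

definition window_density :: "nat set \<Rightarrow> nat \<Rightarrow> real" where
  "window_density A n = (SUP M. real (card (A \<inter> {M..<M+n})) / real n)"

lemma bdd_above_window_ratios: "bdd_above (range (\<lambda>M. real (card (A \<inter> {M..<M+n})) / real n))"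
proof (rule bdd_aboveI[of _ 1])
  fix x assume "x \<in> range (\<lambda>M. real (card (A \<inter> {M..<M+n})) / real n)"
  then obtain M where x: "x = real (card (A \<inter> {M..<M+n})) / real n" by auto
  have "card (A \<inter> {M..<M+n}) \<le> n"
    using card_mono[of "{M..<M+n}" "A \<inter> {M..<M+n}"] by simp
  then show "x \<le> 1" unfolding x by (cases "n = 0") (auto simp: divide_le_eq)
qed

lemma window_ratio_le_window_density: "real (card (A \<inter> {M..<M+n})) / real n \<le> window_density A n"
  unfolding window_density_def by (rule cSUP_upper[OF _ bdd_above_window_ratios]) simp

lemma window_density_le: "(\<And>M. real (card (A \<inter> {M..<M+n})) / real n \<le> c) \<Longrightarrow> window_density A n \<le> c"
  unfolding window_density_def by (rule cSUP_least) auto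

lemma window_density_nonneg: "0 \<le> window_density A n"
  using window_ratio_le_window_density[of A 0 n] by (meson divide_nonneg_nonneg of_nat_0_le_iff order_trans)

lemma card_window_le_window_density: "real (card (A \<inter> {M..<M+n})) \<le> real n * window_density A n"
  using window_ratio_le_window_density[of A M n] by (cases "n = 0") (simp_all add: field_simps)

lemma card_window_add:
  fixes A :: "nat set"
  shows "card (A \<inter> {M..<M+(m+n)}) = card (A \<inter> {M..<M+m}) + card (A \<inter> {M+m..<(M+m)+n})"
proof -
  have "{M..<M+m} \<union> {M+m..<(M+m)+n} = {M..<M+(m+n)}"
    using ivl_disj_un_two(3)[of M "M+m" "M+m+n"] by (simp add: add.assoc)
  then have "A \<inter> {M..<M+(m+n)} = (A \<inter> {M..<M+m}) \<union> (A \<inter> {M+m..<(M+m)+n})"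
    by blast
  moreover have "(A \<inter> {M..<M+m}) \<inter> (A \<inter> {M+m..<(M+m)+n}) = {}" by auto
  ultimately show ?thesis by (simp add: card_Un_disjoint)
qed

lemma window_density_tendsto: "window_density A \<longlonglongrightarrow> upper_banach_density A"
proof -
  define a where "a = (\<lambda>n. real n * window_density A n)"
  have "convergent (\<lambda>n. a n / real n)"
  proof (rule Fekete_subadditive_convergent)
    show "0 \<le> a n" for n
      unfolding a_def using window_density_nonneg by simp
    show "a (m + n) \<le> a m + a n" for m n
    proof (cases "m + n = 0")
      case False
      have "window_density A (m + n) \<le> (a m + a n) / real (m + n)"
      proof (rule window_density_le)
        fix M
        have "real (card (A \<inter> {M..<M+(m+n)})) \<le> a m + a n"
          unfolding card_window_add a_def
          using card_window_le_window_density[of A M m] card_window_le_window_density[of A "M+m" n] by simp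
        then show "real (card (A \<inter> {M..<M+(m+n)})) / real (m + n) \<le> (a m + a n) / real (m + n)"
          by (intro divide_right_mono) auto
      qed
      then show ?thesis using False by (simp add: a_def field_simps)
    qed (simp add: a_def)
  qed
  moreover have "(\<lambda>n. a n / real n) = window_density A"
    by (rule ext) (simp add: a_def window_density_def)
  moreover have "upper_banach_density A = lim (window_density A)"
    unfolding upper_banach_density_def window_density_def ..
  ultimately show ?thesis by (simp add: convergent_LIMSEQ_iff)
qed

section \<open>Visit frequencies in uniquely ergodic systems\<close>

lemma card_visits_window:
  "card ({k. (T ^^ k) x \<in> G} \<inter> {M..<M+n}) = card {m. m < n \<and> (T ^^ m) ((T ^^ M) x) \<in> G}"
proof -
  have "{k. (T ^^ k) x \<in> G} \<inter> {M..<M+n} = (\<lambda>m. m + M) ` {m. m < n \<and> (T ^^ m) ((T ^^ M) x) \<in> G}"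
  proof (intro set_eqI iffI)
    fix k assume k: "k \<in> {k. (T ^^ k) x \<in> G} \<inter> {M..<M+n}"
    have "(T ^^ (k - M)) ((T ^^ M) x) = (T ^^ (k - M + M)) x" by (simp add: funpow_add)
    then have "k = (k - M) + M" "(T ^^ (k - M)) ((T ^^ M) x) \<in> G" using k by auto
    then show "k \<in> (\<lambda>m. m + M) ` {m. m < n \<and> (T ^^ m) ((T ^^ M) x) \<in> G}"
      using k by (intro image_eqI) auto
  qed (auto simp: funpow_add)
  then show ?thesis by (simp add: card_image)
qed

lemma uniquely_ergodic_visits_le:
  assumes tds: "tds X T" and ue: "uniquely_ergodic_with X T \<mu>"
    and F: "closed F" "F \<subseteq> X" and e: "\<epsilon> > 0"
  shows "\<exists>n0. \<forall>n\<ge>n0. \<forall>x\<in>X.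
    real (card {m. m < n \<and> (T ^^ m) x \<in> F}) \<le> (measure \<mu> F + \<epsilon>) * real n"
proof (rule ccontr)
  let ?frequent = "\<lambda>n x. (measure \<mu> F + \<epsilon>) * real n < real (card {m. m < n \<and> (T ^^ m) x \<in> F})"
  assume "\<not> ?thesis"
  then have "\<forall>n0. \<exists>n\<ge>n0. \<exists>x\<in>X. ?frequent n x"
    by (auto simp: not_le)
  then have "\<forall>j. \<exists>n. Suc j \<le> n \<and> (\<exists>x. x \<in> X \<and> ?frequent n x)"
    by blast
  from choice[OF this] obtain N where N: "\<And>j. N j \<ge> Suc j" "\<forall>j. \<exists>x. x \<in> X \<and> ?frequent (N j) x"
    by blast
  from choice[OF N(2)] obtain y where y: "\<And>j. y j \<in> X" "\<And>j. ?frequent (N j) (y j)"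
    by blast
  interpret krylov_bogolyubov X T y N
  proof
    show "compact X" "continuous_on X T" "T ` X \<subseteq> X" using tds by (auto simp: tds_def)
    show "X \<noteq> {}" using y(1) by blast
    show "y j \<in> X" "N j > 0" for j using y(1) N(1)[of j] by auto
    show "filterlim N at_top sequentially"
      using N(1) Suc_leD by (intro filterlim_at_top_mono[OF filterlim_ident] always_eventually) blast
  qed
  have "measure \<mu> F + \<epsilon> < orbit_avg j (indicator F)" for j
    using y(2)[of j] N_pos[of j]
    by (simp add: orbit_avg_def sum_indicator_eq_card_lessThan field_simps)
  then obtain \<nu> where "invariant_prob X T \<nu>" "measure \<mu> F + \<epsilon> \<le> measure \<nu> F"
    using ex_invariant_prob_ge_visit_frequency[OF F] by blast
  then show False using ue e by (simp add: uniquely_ergodic_with_def)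
qed

lemma upper_banach_density_visits_ge:
  assumes tds: "tds X T" and ue: "uniquely_ergodic_with X T \<mu>"
    and U: "openin (top_of_set X) U" and x0: "x0 \<in> X"
  shows "measure \<mu> U \<le> upper_banach_density {n. (T ^^ n) x0 \<in> U}"
proof (rule field_le_epsilon)
  fix \<epsilon> :: real assume e: "\<epsilon> > 0"
  have X: "compact X" "T ` X \<subseteq> X" using tds by (auto simp: tds_def)
  have inv: "prob_space \<mu>" "sets \<mu> = sets (restrict_space borel X)" "space \<mu> = X"
    using ue by (auto simp: uniquely_ergodic_with_def invariant_prob_def)
  interpret prob_space \<mu> by (rule inv(1))
  have F: "closed (X - U)" "X - U \<subseteq> X"
    using U compact_imp_closed[OF X(1)] by (auto simp: openin_closedin_eq closedin_closed_eq)
  obtain V where "open V" "U = X \<inter> V" using U by (auto simp: openin_open)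
  then have "U \<in> sets \<mu>"
    using inv(2) by (auto simp: sets_restrict_space intro!: image_eqI[where x=V])
  then have measure_F: "measure \<mu> (X - U) = 1 - measure \<mu> U"
    using inv(3) prob_space openin_subset[OF U] by (subst finite_measure_Diff) auto
  obtain n0 where n0: "\<And>n x. n \<ge> n0 \<Longrightarrow> x \<in> X \<Longrightarrow>
      real (card {m. m < n \<and> (T ^^ m) x \<in> X - U}) \<le> (1 - measure \<mu> U + \<epsilon>) * real n"
    using uniquely_ergodic_visits_le[OF tds ue F e] measure_F by auto
  have "measure \<mu> U - \<epsilon> \<le> window_density {n. (T ^^ n) x0 \<in> U} n" if n: "n \<ge> max n0 1" for n
  proof -
    have "{m. m < n \<and> (T ^^ m) x0 \<in> U} \<union> {m. m < n \<and> (T ^^ m) x0 \<in> X - U} = {..<n}"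
      using funpow_mem[OF X(2) x0] by auto
    then have "card {m. m < n \<and> (T ^^ m) x0 \<in> U} + card {m. m < n \<and> (T ^^ m) x0 \<in> X - U} = n"
      by (subst card_Un_disjoint[symmetric]) auto
    then have "(measure \<mu> U - \<epsilon>) * real n \<le> real (card {m. m < n \<and> (T ^^ m) x0 \<in> U})"
      using n0[OF _ x0, of n] n by (simp add: algebra_simps)
    also have "\<dots> = real (card ({k. (T ^^ k) x0 \<in> U} \<inter> {0..<0+n}))"
      using card_visits_window[of T x0 U 0 n] by simp
    also have "\<dots> \<le> real n * window_density {n. (T ^^ n) x0 \<in> U} n"
      by (rule card_window_le_window_density)
    finally show ?thesis using n by (simp add: mult.commute)
  qed
  then have "measure \<mu> U - \<epsilon> \<le> upper_banach_density {n. (T ^^ n) x0 \<in> U}"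
    by (intro LIMSEQ_le_const[OF window_density_tendsto]) blast
  then show "measure \<mu> U \<le> upper_banach_density {n. (T ^^ n) x0 \<in> U} + \<epsilon>" by simp
qed

lemma upper_banach_density_le_measure:
  assumes tds: "tds X T" and ue: "uniquely_ergodic_with X T \<mu>"
    and G: "closed G" "G \<subseteq> X" and x0: "x0 \<in> X" and B: "\<And>b. b \<in> B \<Longrightarrow> (T ^^ b) x0 \<in> G"
  shows "upper_banach_density B \<le> measure \<mu> G"
proof (rule field_le_epsilon)
  fix \<epsilon> :: real assume e: "\<epsilon> > 0"
  have T_X: "T ` X \<subseteq> X" using tds by (simp add: tds_def)
  obtain n0 where n0: "\<And>n x. n \<ge> n0 \<Longrightarrow> x \<in> X \<Longrightarrow>
      real (card {m. m < n \<and> (T ^^ m) x \<in> G}) \<le> (measure \<mu> G + \<epsilon>) * real n"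
    using uniquely_ergodic_visits_le[OF tds ue G e] by auto
  have "window_density B n \<le> measure \<mu> G + \<epsilon>" if n: "n \<ge> max n0 1" for n
  proof (rule window_density_le)
    fix M
    have "card (B \<inter> {M..<M+n}) \<le> card ({k. (T ^^ k) x0 \<in> G} \<inter> {M..<M+n})"
      using B by (intro card_mono) auto
    also have "\<dots> = card {m. m < n \<and> (T ^^ m) ((T ^^ M) x0) \<in> G}"
      by (rule card_visits_window)
    finally have "real (card (B \<inter> {M..<M+n})) \<le> (measure \<mu> G + \<epsilon>) * real n"
      using n0[of n "(T ^^ M) x0"] n funpow_mem[OF T_X x0] by simp
    then show "real (card (B \<inter> {M..<M+n})) / real n \<le> measure \<mu> G + \<epsilon>"
      using n by (simp add: divide_le_eq)
  qed
  then show "upper_banach_density B \<le> measure \<mu> G + \<epsilon>"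
    by (intro LIMSEQ_le_const2[OF window_density_tendsto]) blast
qed

section \<open>Sumsets in return-time sets of mixing systems\<close>

lemma mixing_shrink_closed_set:
  assumes tds: "tds X T" and inv: "invariant_prob X T \<mu>" and mix: "mixing \<mu> T"
    and F: "closed F" "F \<subseteq> X" and C: "infinite C"
    and P: "\<And>x c. x \<in> P \<Longrightarrow> c \<in> C \<Longrightarrow> (T ^^ c) x \<in> F"
    and G: "closed G" "G \<subseteq> X" "P \<subseteq> G" and \<epsilon>: "\<epsilon> > 0"
  shows "\<exists>G'. closed G' \<and> G' \<subseteq> X \<and> P \<subseteq> G' \<and> measure \<mu> G' < measure \<mu> G * measure \<mu> F + \<epsilon>"
proof -
  have X: "closed X" "continuous_on X T" "T ` X \<subseteq> X"
    using tds by (auto simp: tds_def compact_imp_closed)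
  have "sets \<mu> = sets (restrict_space borel X)" "space \<mu> = X"
    using inv by (auto simp: invariant_prob_def)
  then have "(\<lambda>n. measure \<mu> (G \<inter> ((T ^^ n) -` F \<inter> X))) \<longlonglongrightarrow> measure \<mu> G * measure \<mu> F"
    using mix F G(1,2) closed_in_sets_restrict_borel unfolding mixing_def by metis
  then have "\<forall>\<^sub>F n in sequentially.
      measure \<mu> (G \<inter> ((T ^^ n) -` F \<inter> X)) < measure \<mu> G * measure \<mu> F + \<epsilon>"
    using \<epsilon> by (intro order_tendstoD) auto
  then obtain n0 where n0: "\<And>n. n \<ge> n0 \<Longrightarrow>
      measure \<mu> (G \<inter> ((T ^^ n) -` F \<inter> X)) < measure \<mu> G * measure \<mu> F + \<epsilon>"
    by (auto simp: eventually_sequentially)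
  obtain c where c: "c \<in> C" "c \<ge> n0" using C unfolding infinite_nat_iff_unbounded_le by blast
  have "closed (X \<inter> (T ^^ c) -` F)"
    using continuous_closed_preimage[OF continuous_on_funpow[OF X(2,3)] X(1) F(1)] .
  then have "closed (G \<inter> ((T ^^ c) -` F \<inter> X))"
    using G(1) by (simp add: Int_commute Int_left_commute closed_Int)
  moreover have "P \<subseteq> G \<inter> ((T ^^ c) -` F \<inter> X)" using G(2,3) P c(1) by auto
  ultimately show ?thesis using n0[OF c(2)] by blast
qed

lemma mixing_closed_return_set_small:
  assumes tds: "tds X T" and inv: "invariant_prob X T \<mu>" and mix: "mixing \<mu> T"
    and F: "closed F" "F \<subseteq> X" "measure \<mu> F < 1" and C: "infinite C"
    and P: "P \<subseteq> X" "\<And>x c. x \<in> P \<Longrightarrow> c \<in> C \<Longrightarrow> (T ^^ c) x \<in> F" and \<eta>: "\<eta> > 0"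
  shows "\<exists>G. closed G \<and> G \<subseteq> X \<and> P \<subseteq> G \<and> measure \<mu> G \<le> measure \<mu> F ^ k + \<eta>"
proof (induction k)
  case 0
  have "closed X" using tds by (simp add: tds_def compact_imp_closed)
  moreover have "measure \<mu> X \<le> 1"
    using inv prob_space.prob_le_1 by (auto simp: invariant_prob_def)
  ultimately show ?case using P(1) \<eta> by force
next
  case (Suc k)
  define a where "a = measure \<mu> F"
  have a: "0 \<le> a" "a < 1" using F(3) by (auto simp: a_def)
  obtain G where G: "closed G" "G \<subseteq> X" "P \<subseteq> G" "measure \<mu> G \<le> a ^ k + \<eta>"
    using Suc by (auto simp: a_def)
  have "\<eta> * (1 - a) > 0" using \<eta> a by simp
  from mixing_shrink_closed_set[OF tds inv mix F(1,2) C P(2) G(1-3) this]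
  obtain G' where G': "closed G'" "G' \<subseteq> X" "P \<subseteq> G'" "measure \<mu> G' < measure \<mu> G * a + \<eta> * (1 - a)"
    by (auto simp: a_def)
  note G'(4)
  also have "measure \<mu> G * a + \<eta> * (1 - a) \<le> (a ^ k + \<eta>) * a + \<eta> * (1 - a)"
    using G(4) a by (intro add_right_mono mult_right_mono) auto
  also have "\<dots> = a ^ Suc k + \<eta>" by (simp add: algebra_simps)
  finally show ?case using G'(1-3) unfolding a_def by (blast intro: less_imp_le)
qed

lemma upper_banach_density_sumset_le_0:
  assumes tds: "tds X T" and ue: "uniquely_ergodic_with X T \<mu>" and mix: "mixing \<mu> T"
    and F: "closed F" "F \<subseteq> X" "measure \<mu> F < 1" and x0: "x0 \<in> X"
    and C: "infinite C" and BC: "sumset B C \<subseteq> {n. (T ^^ n) x0 \<in> F}"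
  shows "upper_banach_density B \<le> 0"
proof (rule field_le_epsilon)
  fix \<eta> :: real assume \<eta>: "\<eta> > 0"
  have inv: "invariant_prob X T \<mu>" using ue by (simp add: uniquely_ergodic_with_def)
  let ?P = "(\<lambda>b. (T ^^ b) x0) ` B"
  have P: "?P \<subseteq> X" using tds x0 funpow_mem[of T X x0] by (auto simp: tds_def)
  have returns: "(T ^^ c) x \<in> F" if x: "x \<in> ?P" and c: "c \<in> C" for x c
  proof -
    obtain b where "b \<in> B" "x = (T ^^ b) x0" using x by blast
    moreover have "b + c \<in> sumset B C" using \<open>b \<in> B\<close> c unfolding sumset_def by blast
    ultimately show ?thesis using BC by (auto simp: funpow_add add.commute[of b c])
  qed
  have "upper_banach_density B \<le> measure \<mu> F ^ k + \<eta>" for k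
  proof -
    obtain G where "closed G" "G \<subseteq> X" "?P \<subseteq> G" "measure \<mu> G \<le> measure \<mu> F ^ k + \<eta>"
      using mixing_closed_return_set_small[OF tds inv mix F C P returns \<eta>] by blast
    then show ?thesis
      using upper_banach_density_le_measure[OF tds ue _ _ x0, of G B] by fastforce
  qed
  moreover have "(\<lambda>k. measure \<mu> F ^ k + \<eta>) \<longlonglongrightarrow> 0 + \<eta>"
    using F(3) by (intro tendsto_add LIMSEQ_power_zero) auto
  ultimately show "upper_banach_density B \<le> 0 + \<eta>"
    by (intro LIMSEQ_le_const) auto
qed

theorem mainTheorem3:
  fixes X :: "'a::metric_space set" and T :: "'a \<Rightarrow> 'a" and \<mu> :: "'a measure"
    and U :: "'a set" and x0 :: 'a
  assumes "tds X T"
    and "uniquely_ergodic_with X T \<mu>"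
    and "mixing \<mu> T"
    and "openin (top_of_set X) U" and "U \<subseteq> X"
    and "0 < measure \<mu> U" and "measure \<mu> (closure U) < 1"
    and "x0 \<in> X"
  shows "upper_banach_density {n. (T ^^ n) x0 \<in> U} > 0 \<and>
    \<not> (\<exists>B C. upper_banach_density B > 0 \<and> infinite C \<and>
          sumset B C \<subseteq> {n. (T ^^ n) x0 \<in> U})"
proof
  show "upper_banach_density {n. (T ^^ n) x0 \<in> U} > 0"
    using upper_banach_density_visits_ge[OF assms(1,2,4,8)] assms(6) by linarith
  have closure: "closed (closure U)" "closure U \<subseteq> X"
    using closure_minimal[OF assms(5)] assms(1) by (auto simp: tds_def compact_imp_closed)
  have "upper_banach_density B \<le> 0"
    if "infinite C" "sumset B C \<subseteq> {n. (T ^^ n) x0 \<in> U}" for B C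
    using that closure_subset[of U]
    by (intro upper_banach_density_sumset_le_0[OF assms(1-3) closure assms(7,8) that(1)]) blast
  then show "\<not> (\<exists>B C. upper_banach_density B > 0 \<and> infinite C \<and>
      sumset B C \<subseteq> {n. (T ^^ n) x0 \<in> U})"
    by (meson not_le)
qed

end
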